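(* Let $q$ be a prime power and let $\mathscr{L}_1,\dots,\mathscr{L}_q$ be $q$ distinct parallel classes of affine lines in $\mathbb{F}_q^5$ (so each $\mathscr{L}_i$ consists of all $q^4$ lines with a fixed direction $d_i\in\mathbb{F}_q^5\setminus\{0\}$, and the directions $d_1,\dots,d_q$ are pairwise non-parallel). Let $G_{\mathscr{L}}(q)$ be the bipartite incidence graph between $\mathscr{P}=\mathbb{F}_q^5$ and $\mathscr{L}=\bigcup_{i\in[q]}\mathscr{L}_i$ (a point $x$ is adjacent to a line $\ell$ iff $x\in\ell$). Then for every $\delta>0$ there exists $q_0(\delta)$ such that for every prime power $q\ge q_0(\delta)$ and every such choice of classes, every subgraph $H\subseteq G_{\mathscr{L}}(q)$ with at least $\delta q^6$ edges contains a copy of $C_8$. More precisely, $\operatorname{ex}(G_{\mathscr{L}}(q),C_8)=O(q^{23/4})$ as $q\to\infty$, with the implied constant independent of the choice of parallel classes.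
   Context: For graphs $G$ and $F$, $\operatorname{ex}(G,F)$ denotes the maximum number of edges in an $F$-free subgraph of $G$. $C_8$ is the cycle of length 8. *)

theory Defs
  imports Complex_Main "HOL-Algebra.Ring" "HOL-Library.FuncSet"
begin

definition points :: "('a, 'b) ring_scheme \<Rightarrow> (nat \<Rightarrow> 'a) set" where
  "points R = {0..<5} \<rightarrow>\<^sub>E carrier R"

definition zero_vec :: "('a, 'b) ring_scheme \<Rightarrow> nat \<Rightarrow> 'a" where
  "zero_vec R = restrict (\<lambda>k. \<zero>\<^bsub>R\<^esub>) {0..<5}"

definition smult_vec :: "('a, 'b) ring_scheme \<Rightarrow> 'a \<Rightarrow> (nat \<Rightarrow> 'a) \<Rightarrow> nat \<Rightarrow> 'a" where
  "smult_vec R c d = restrict (\<lambda>k. c \<otimes>\<^bsub>R\<^esub> d k) {0..<5}"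

definition affine_line :: "('a, 'b) ring_scheme \<Rightarrow> (nat \<Rightarrow> 'a) \<Rightarrow> (nat \<Rightarrow> 'a) \<Rightarrow> (nat \<Rightarrow> 'a) set" where
  "affine_line R p d = {restrict (\<lambda>k. p k \<oplus>\<^bsub>R\<^esub> t \<otimes>\<^bsub>R\<^esub> d k) {0..<5} | t. t \<in> carrier R}"

definition parallel_class :: "('a, 'b) ring_scheme \<Rightarrow> (nat \<Rightarrow> 'a) \<Rightarrow> (nat \<Rightarrow> 'a) set set" where
  "parallel_class R d = {affine_line R p d | p. p \<in> points R}"

definition valid_dirs :: "('a, 'b) ring_scheme \<Rightarrow> (nat \<Rightarrow> nat \<Rightarrow> 'a) \<Rightarrow> bool" where
  "valid_dirs R D \<longleftrightarrow>
     (\<forall>i < card (carrier R). D i \<in> points R \<and> D i \<noteq> zero_vec R) \<and>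
     (\<forall>i < card (carrier R). \<forall>j < card (carrier R). i \<noteq> j \<longrightarrow>
        \<not> (\<exists>c \<in> carrier R. D i = smult_vec R c (D j)))"

definition line_set :: "('a, 'b) ring_scheme \<Rightarrow> (nat \<Rightarrow> nat \<Rightarrow> 'a) \<Rightarrow> (nat \<Rightarrow> 'a) set set" where
  "line_set R D = (\<Union>i < card (carrier R). parallel_class R (D i))"

definition inc_edges :: "('a, 'b) ring_scheme \<Rightarrow> (nat \<Rightarrow> nat \<Rightarrow> 'a)
    \<Rightarrow> ((nat \<Rightarrow> 'a) + (nat \<Rightarrow> 'a) set) set set" where
  "inc_edges R D = {{Inl x, Inr l} | x l. x \<in> points R \<and> l \<in> line_set R D \<and> x \<in> l}"

definition has_C8 :: "'v set set \<Rightarrow> bool" where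
  "has_C8 E \<longleftrightarrow> (\<exists>v :: nat \<Rightarrow> 'v. inj_on v {0..<8} \<and> (\<forall>i < 8. {v i, v ((i + 1) mod 8)} \<in> E))"

definition ex_C8 :: "'v set set \<Rightarrow> nat" where
  "ex_C8 E = Max {card H | H. H \<subseteq> E \<and> \<not> has_C8 H}"

end

(* Write S_d for the set of points x whose edge to the line through x in direction d lies in H,
   so that |H| <= sum_i |S_(d_i)|.  If x, x + s a, x + t b and x + s a + t b (s, t nonzero) all lie
   in S_a \<inter> S_b, these four points and the four lines joining them (two of direction a, two
   of direction b) form a C_8.  Hence, in a C_8-free H, for each s != 0 the points of S_a \<inter> S_b whose translate by
   s a stays in S_a \<inter> S_b lie on distinct lines of direction b, so there are at most q^4 of
   them; Cauchy-Schwarz over the q^4 lines of direction a then gives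
   |S_a \<inter> S_b|^2 <= q^4 (|S_a \<inter> S_b| + q^5), i.e. |S_a \<inter> S_b| = O(q^(9/2)).
   A second Cauchy-Schwarz over the q^5 points, counting pairs of directions at a common point,
   gives E^2 <= q^5 (E + q^2 O(q^(9/2))) for E = sum_i |S_(d_i)|, whence |H| <= E = O(q^(23/4)). *)

theory Submission
  imports Defs "HOL-Algebra.Multiplicative_Group" "HOL-Analysis.Convex"
begin

lemma card_squared_le_card_mult_card_fibre_pairs:
  assumes "finite S" and "finite K" and "f ` S \<subseteq> K"
  shows "card S ^ 2 \<le> card K * card {(x, y) \<in> S \<times> S. f x = f y}"
proof -
  define F where "F k = {x \<in> S. f x = k}" for k
  define pairs where "pairs = {(x, y) \<in> S \<times> S. f x = f y}"
  have finF: "finite (F k)" for k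
    using assms(1) by (simp add: F_def)
  have "S = (\<Union>k\<in>K. F k)"
    using assms(3) by (auto simp: F_def)
  then have "card S = card (\<Union>k\<in>K. F k)"
    by (rule arg_cong)
  also have "\<dots> = (\<Sum>k\<in>K. card (F k))"
    using assms(2) finF by (intro card_UN_disjoint) (auto simp: F_def)
  finally have card_S: "card S = (\<Sum>k\<in>K. card (F k))" .
  have "pairs = (\<Union>k\<in>K. F k \<times> F k)"
    using assms(3) by (auto simp: F_def pairs_def)
  then have "card pairs = card (\<Union>k\<in>K. F k \<times> F k)"
    by (rule arg_cong)
  also have "\<dots> = (\<Sum>k\<in>K. card (F k) ^ 2)"
    using assms(2) finF
    by (subst card_UN_disjoint) (auto simp: F_def card_cartesian_product power2_eq_square)
  finally have card_pairs: "card pairs = (\<Sum>k\<in>K. card (F k) ^ 2)" .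
  have "real (card S ^ 2) = (\<Sum>k\<in>K. real (card (F k))) ^ 2"
    by (simp add: card_S)
  also have "\<dots> \<le> (\<Sum>k\<in>K. (real (card (F k))) ^ 2) * card K"
    by (rule sum_squared_le_sum_of_squares)
  also have "\<dots> = real (card K * card pairs)"
    by (simp add: card_pairs)
  finally show ?thesis
    unfolding pairs_def by (simp only: of_nat_le_iff)
qed

lemma card_Sigma_pairs_same_snd:
  assumes "finite I" and "\<And>i. i \<in> I \<Longrightarrow> finite (S i)"
  shows "card {(p, p') \<in> Sigma I S \<times> Sigma I S. snd p = snd p'} = (\<Sum>i\<in>I. \<Sum>j\<in>I. card (S i \<inter> S j))"
proof -
  let ?f = "\<lambda>((i, j), x). ((i, x), (j, x))"
  have "{(p, p') \<in> Sigma I S \<times> Sigma I S. snd p = snd p'} = ?f ` (SIGMA (i, j):I \<times> I. S i \<inter> S j)"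
    by (auto simp: image_iff)
  moreover have "inj_on ?f (SIGMA (i, j):I \<times> I. S i \<inter> S j)"
    by (auto simp: inj_on_def)
  ultimately have "card {(p, p') \<in> Sigma I S \<times> Sigma I S. snd p = snd p'}
      = (\<Sum>(i, j)\<in>I \<times> I. card (S i \<inter> S j))"
    using assms by (simp add: card_image split_def)
  then show ?thesis
    by (simp add: sum.cartesian_product)
qed

lemma card_Sigma_squared_le:
  fixes M :: real
  assumes "finite I" and "finite U" and "\<And>i. i \<in> I \<Longrightarrow> S i \<subseteq> U" and "0 \<le> M"
    and "\<And>i j. i \<in> I \<Longrightarrow> j \<in> I \<Longrightarrow> i \<noteq> j \<Longrightarrow> real (card (S i \<inter> S j)) \<le> M"
  shows "real (card (Sigma I S)) ^ 2 \<le> real (card U) * (real (card (Sigma I S)) + real (card I) ^ 2 * M)"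
proof -
  define pairs where "pairs = {(p, p') \<in> Sigma I S \<times> Sigma I S. snd p = snd p'}"
  have finS: "finite (S i)" if "i \<in> I" for i
    using assms(3)[OF that] assms(2) by (rule finite_subset)
  have "card pairs = (\<Sum>i\<in>I. \<Sum>j\<in>I. card (S i \<inter> S j))"
    unfolding pairs_def using assms(1) finS by (rule card_Sigma_pairs_same_snd)
  then have "real (card pairs) = (\<Sum>i\<in>I. \<Sum>j\<in>I. real (card (S i \<inter> S j)))"
    by simp
  also have "\<dots> \<le> (\<Sum>i\<in>I. real (card (S i)) + real (card I) * M)"
  proof (rule sum_mono)
    fix i assume i: "i \<in> I"
    have "(\<Sum>j\<in>I. real (card (S i \<inter> S j))) = real (card (S i)) + (\<Sum>j\<in>I - {i}. real (card (S i \<inter> S j)))"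
      using assms(1) i by (simp add: sum.remove)
    also have "(\<Sum>j\<in>I - {i}. real (card (S i \<inter> S j))) \<le> (\<Sum>j\<in>I - {i}. M)"
      using i assms(5) by (intro sum_mono) auto
    also have "\<dots> \<le> real (card I) * M"
      using assms(4) by (simp add: card_Diff1_le mult_right_mono)
    finally show "(\<Sum>j\<in>I. real (card (S i \<inter> S j))) \<le> real (card (S i)) + real (card I) * M"
      by simp
  qed
  also have "\<dots> = real (card (Sigma I S)) + real (card I) ^ 2 * M"
    using assms(1) finS by (simp add: sum.distrib power2_eq_square)
  finally have card_pairs: "real (card pairs) \<le> real (card (Sigma I S)) + real (card I) ^ 2 * M" .
  have "snd ` Sigma I S \<subseteq> U"
    using assms(3) by force
  then have "card (Sigma I S) ^ 2 \<le> card U * card pairs"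
    unfolding pairs_def using assms(1,2) finS by (intro card_squared_le_card_mult_card_fibre_pairs) auto
  then have "real (card (Sigma I S)) ^ 2 \<le> real (card U) * real (card pairs)"
    by (metis of_nat_le_iff of_nat_mult of_nat_power)
  also have "\<dots> \<le> real (card U) * (real (card (Sigma I S)) + real (card I) ^ 2 * M)"
    using card_pairs by (intro mult_left_mono) auto
  finally show ?thesis .
qed

lemma le_if_square_le_affine:
  fixes a b c x :: real
  assumes "0 \<le> a" and "2 * a \<le> c" and "2 * a * b \<le> c ^ 2" and "x ^ 2 \<le> a * (x + b)"
  shows "x \<le> c"
proof (rule ccontr)
  assume "\<not> x \<le> c"
  then have cx: "c < x" and c0: "0 \<le> c"
    using assms(1,2) by auto
  have "2 * a * x \<le> c * x"
    using assms(2) cx c0 by (intro mult_right_mono) auto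
  also have "\<dots> < x * x"
    using cx c0 by (intro mult_strict_right_mono) auto
  finally have "2 * a * x < x ^ 2"
    by (simp add: power2_eq_square)
  moreover have "c ^ 2 < x ^ 2"
    using cx c0 by (intro power_strict_mono) auto
  ultimately show False
    using assms(3,4) by (simp add: distrib_left)
qed

lemma le_power4_if_mult_pow6_le_powr:
  fixes \<delta> C Q :: real
  assumes "0 < \<delta>" and "0 < Q" and "\<delta> * Q ^ 6 \<le> C * Q powr (23/4)"
  shows "Q \<le> (C / \<delta>) ^ 4"
proof -
  have "Q ^ 6 = Q powr (1/4) * Q powr (23/4)"
    using assms(2) by (simp flip: powr_add)
  then have "(\<delta> * Q powr (1/4)) * Q powr (23/4) \<le> C * Q powr (23/4)"
    using assms(3) by (simp add: mult.assoc)
  then have "\<delta> * Q powr (1/4) \<le> C"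
    using assms(2) by simp
  then have "Q powr (1/4) \<le> C / \<delta>"
    using assms(1) by (simp add: field_simps)
  then have "(Q powr (1/4)) ^ 4 \<le> (C / \<delta>) ^ 4"
    by (intro power_mono) auto
  then show ?thesis
    using assms(2) by (simp add: powr_power)
qed

lemma has_C8I:
  assumes "distinct [v0, v1, v2, v3, v4, v5, v6, v7]"
    and "{v0, v1} \<in> H" "{v1, v2} \<in> H" "{v2, v3} \<in> H" "{v3, v4} \<in> H"
    and "{v4, v5} \<in> H" "{v5, v6} \<in> H" "{v6, v7} \<in> H" "{v7, v0} \<in> H"
  shows "has_C8 H"
  unfolding has_C8_def
proof (intro exI conjI allI impI)
  let ?vs = "[v0, v1, v2, v3, v4, v5, v6, v7]"
  show "inj_on ((!) ?vs) {0..<8}"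
    using assms(1) by (intro inj_on_nth) auto
  fix i :: nat
  assume "i < 8"
  then have "i = 0 \<or> i = 1 \<or> i = 2 \<or> i = 3 \<or> i = 4 \<or> i = 5 \<or> i = 6 \<or> i = 7"
    by arith
  then show "{?vs ! i, ?vs ! ((i + 1) mod 8)} \<in> H"
    using assms(2-9) by (elim disjE) simp_all
qed

lemma not_has_C8_empty: "\<not> has_C8 {}"
  unfolding has_C8_def by (metis empty_iff zero_less_numeral)

lemma ex_C8_attained:
  assumes "finite E"
  obtains H where "H \<subseteq> E" and "\<not> has_C8 H" and "ex_C8 E = card H"
proof -
  let ?sizes = "{card H | H. H \<subseteq> E \<and> \<not> has_C8 H}"
  have "?sizes \<subseteq> card ` Pow E"
    by auto
  then have "finite ?sizes"
    using assms by (simp add: finite_subset)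
  moreover have "card {} \<in> ?sizes"
    by (intro CollectI exI[of _ "{}"]) (simp add: not_has_C8_empty)
  ultimately have "Max ?sizes \<in> ?sizes"
    by (intro Max_in) auto
  then show ?thesis
    using that by (auto simp: ex_C8_def)
qed

definition line_point :: "('a, 'b) ring_scheme \<Rightarrow> (nat \<Rightarrow> 'a) \<Rightarrow> 'a \<Rightarrow> (nat \<Rightarrow> 'a) \<Rightarrow> nat \<Rightarrow> 'a" where
  "line_point R p t d = restrict (\<lambda>k. p k \<oplus>\<^bsub>R\<^esub> t \<otimes>\<^bsub>R\<^esub> d k) {0..<5}"

lemma affine_line_eq_image: "affine_line R p d = (\<lambda>t. line_point R p t d) ` carrier R"
  unfolding affine_line_def line_point_def by auto

definition independent_dirs :: "('a, 'b) ring_scheme \<Rightarrow> (nat \<Rightarrow> 'a) \<Rightarrow> (nat \<Rightarrow> 'a) \<Rightarrow> bool" where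
  "independent_dirs R a b \<longleftrightarrow> (\<forall>c \<in> carrier R. \<forall>e \<in> carrier R.
     (\<forall>j < 5. c \<otimes>\<^bsub>R\<^esub> a j = e \<otimes>\<^bsub>R\<^esub> b j) \<longrightarrow> c = \<zero>\<^bsub>R\<^esub> \<and> e = \<zero>\<^bsub>R\<^esub>)"

lemma independent_dirsD:
  assumes "independent_dirs R a b" and "c \<in> carrier R" and "e \<in> carrier R"
    and "\<And>j. j < 5 \<Longrightarrow> c \<otimes>\<^bsub>R\<^esub> a j = e \<otimes>\<^bsub>R\<^esub> b j"
  shows "c = \<zero>\<^bsub>R\<^esub>" and "e = \<zero>\<^bsub>R\<^esub>"
  using assms unfolding independent_dirs_def by blast+

lemma independent_dirs_commute: "independent_dirs R a b \<Longrightarrow> independent_dirs R b a"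
  unfolding independent_dirs_def by (metis (no_types, lifting))

definition edge_points :: "('a, 'b) ring_scheme \<Rightarrow> ((nat \<Rightarrow> 'a) + (nat \<Rightarrow> 'a) set) set set
    \<Rightarrow> (nat \<Rightarrow> 'a) \<Rightarrow> (nat \<Rightarrow> 'a) set" where
  "edge_points R H d = {x \<in> points R. {Inl x, Inr (affine_line R x d)} \<in> H}"

lemma finite_points: "finite (carrier R) \<Longrightarrow> finite (points R)"
  unfolding points_def by (auto intro: finite_PiE)

lemma card_points: "card (points R) = card (carrier R) ^ 5"
  unfolding points_def by (simp add: card_PiE)

lemma parallel_class_eq_image: "parallel_class R d = (\<lambda>p. affine_line R p d) ` points R"
  unfolding parallel_class_def by auto

lemma finite_parallel_class: "finite (carrier R) \<Longrightarrow> finite (parallel_class R d)"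
  by (simp add: parallel_class_eq_image finite_points)

lemma edge_points_subset_points: "edge_points R H d \<subseteq> points R"
  unfolding edge_points_def by auto

lemma finite_edge_points: "finite (carrier R) \<Longrightarrow> finite (edge_points R H d)"
  by (rule finite_subset[OF edge_points_subset_points finite_points])

context field
begin

lemma points_closed: "x \<in> points R \<Longrightarrow> j < 5 \<Longrightarrow> x j \<in> carrier R"
  unfolding points_def by auto

lemma points_eqI: "x \<in> points R \<Longrightarrow> y \<in> points R \<Longrightarrow> (\<And>j. j < 5 \<Longrightarrow> x j = y j) \<Longrightarrow> x = y"
  unfolding points_def by (rule PiE_ext) auto

lemma nonzero_component:
  assumes "d \<in> points R" and "d \<noteq> zero_vec R"
  obtains j where "j < 5" and "d j \<noteq> \<zero>"
proof -
  have "\<exists>j<5. d j \<noteq> \<zero>"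
  proof (rule ccontr)
    assume "\<not> (\<exists>j<5. d j \<noteq> \<zero>)"
    then have "d = zero_vec R"
      using assms(1) by (intro points_eqI) (auto simp: zero_vec_def points_def)
    with assms(2) show False ..
  qed
  then show ?thesis
    using that by blast
qed

lemma line_point_closed [simp]:
  "p \<in> points R \<Longrightarrow> d \<in> points R \<Longrightarrow> t \<in> carrier R \<Longrightarrow> line_point R p t d \<in> points R"
  unfolding line_point_def points_def by auto

lemma line_point_nth [simp]: "j < 5 \<Longrightarrow> line_point R p t d j = p j \<oplus> t \<otimes> d j"
  unfolding line_point_def by simp

lemma line_point_zero [simp]: "p \<in> points R \<Longrightarrow> d \<in> points R \<Longrightarrow> line_point R p \<zero> d = p"
  by (rule points_eqI) (auto simp: points_closed)

lemma line_point_add: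
  "\<lbrakk>p \<in> points R; d \<in> points R; s \<in> carrier R; t \<in> carrier R\<rbrakk>
   \<Longrightarrow> line_point R (line_point R p s d) t d = line_point R p (s \<oplus> t) d"
  by (rule points_eqI) (auto simp: points_closed l_distr a_assoc)

lemma line_point_commute:
  "\<lbrakk>p \<in> points R; a \<in> points R; b \<in> points R; s \<in> carrier R; t \<in> carrier R\<rbrakk>
   \<Longrightarrow> line_point R (line_point R p s a) t b = line_point R (line_point R p t b) s a"
  by (rule points_eqI) (auto simp: points_closed a_ac)

lemma mem_affine_line_self: "p \<in> points R \<Longrightarrow> d \<in> points R \<Longrightarrow> p \<in> affine_line R p d"
  unfolding affine_line_eq_image by (rule image_eqI[of _ _ \<zero>]) auto

lemma affine_line_eq_if_mem:
  assumes "x \<in> affine_line R p d" and "p \<in> points R" and "d \<in> points R"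
  shows "affine_line R x d = affine_line R p d"
proof -
  obtain s where s: "s \<in> carrier R" "x = line_point R p s d"
    using assms(1) by (auto simp: affine_line_eq_image)
  have "affine_line R x d = (\<lambda>t. line_point R p t d) ` (\<lambda>t. s \<oplus> t) ` carrier R"
    unfolding affine_line_eq_image image_image using s assms(2,3)
    by (intro image_cong) (auto simp: line_point_add)
  also have "(\<lambda>t. s \<oplus> t) ` carrier R = carrier R"
    using add.surj_const_mult s(1) by simp
  finally show ?thesis
    by (simp add: affine_line_eq_image)
qed

lemma affine_line_line_point:
  "\<lbrakk>p \<in> points R; d \<in> points R; s \<in> carrier R\<rbrakk>
   \<Longrightarrow> affine_line R (line_point R p s d) d = affine_line R p d"
  by (rule affine_line_eq_if_mem) (auto simp: affine_line_eq_image)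

lemma card_affine_line:
  assumes "p \<in> points R" and "d \<in> points R" and "d \<noteq> zero_vec R"
  shows "card (affine_line R p d) = card (carrier R)"
proof -
  obtain j where j: "j < 5" "d j \<noteq> \<zero>"
    using assms(2,3) by (rule nonzero_component)
  have "inj_on (\<lambda>t. line_point R p t d) (carrier R)"
  proof (rule inj_onI)
    fix t t' assume t: "t \<in> carrier R" "t' \<in> carrier R" and eq: "line_point R p t d = line_point R p t' d"
    have "p j \<oplus> t \<otimes> d j = p j \<oplus> t' \<otimes> d j"
      using fun_cong[OF eq, of j] j by simp
    then have "t \<otimes> d j = t' \<otimes> d j"
      using t j assms by (simp add: points_closed)
    then show "t = t'"
      using t j assms by (simp add: points_closed m_rcancel)
  qed
  then show ?thesis
    by (simp add: affine_line_eq_image card_image)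
qed

lemma card_parallel_class:
  assumes fin: "finite (carrier R)" and d: "d \<in> points R" "d \<noteq> zero_vec R"
  shows "card (parallel_class R d) = card (carrier R) ^ 4"
proof -
  have lines_subset: "affine_line R p d \<subseteq> points R" if "p \<in> points R" for p
    using that d by (auto simp: affine_line_eq_image)
  have union: "\<Union> (parallel_class R d) = points R"
    using lines_subset mem_affine_line_self d by (auto simp: parallel_class_eq_image)
  have disjoint: "l \<inter> l' = {}"
    if l: "l \<in> parallel_class R d" and l': "l' \<in> parallel_class R d" and "l \<noteq> l'" for l l'
  proof (rule ccontr)
    obtain p p' where p: "p \<in> points R" "l = affine_line R p d"
      and p': "p' \<in> points R" "l' = affine_line R p' d"
      using l l' by (auto simp: parallel_class_eq_image)
    assume "l \<inter> l' \<noteq> {}"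
    then obtain x where "x \<in> affine_line R p d" "x \<in> affine_line R p' d"
      using p p' by auto
    then have "l = l'"
      using p p' d by (metis affine_line_eq_if_mem)
    with \<open>l \<noteq> l'\<close> show False ..
  qed
  have "card (carrier R) * card (parallel_class R d) = card (\<Union> (parallel_class R d))"
  proof (rule card_partition)
    show "finite (parallel_class R d)"
      using fin by (rule finite_parallel_class)
    show "finite (\<Union> (parallel_class R d))"
      using finite_points[OF fin] by (simp add: union)
    show "card l = card (carrier R)" if "l \<in> parallel_class R d" for l
      using that d card_affine_line by (auto simp: parallel_class_eq_image)
  qed (use disjoint in blast)
  also have "\<dots> = card (carrier R) * card (carrier R) ^ 4"
    by (simp add: union card_points flip: power_Suc)
  finally show ?thesis
    using fin by (auto simp: card_gt_0_iff)
qed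

lemma independent_dirs_if_not_multiple:
  assumes a: "a \<in> points R" and b: "b \<in> points R" "b \<noteq> zero_vec R"
    and not_multiple: "\<forall>c \<in> carrier R. a \<noteq> smult_vec R c b"
  shows "independent_dirs R a b"
  unfolding independent_dirs_def
proof (intro ballI impI)
  fix c e assume ce: "c \<in> carrier R" "e \<in> carrier R" and eq: "\<forall>j<5. c \<otimes> a j = e \<otimes> b j"
  have c0: "c = \<zero>"
  proof (rule ccontr)
    assume "c \<noteq> \<zero>"
    then have inv_c: "inv c \<in> carrier R" "inv c \<otimes> c = \<one>"
      using ce by (auto simp: field_Units)
    have "a = smult_vec R (inv c \<otimes> e) b"
    proof (rule points_eqI[OF a])
      show "smult_vec R (inv c \<otimes> e) b \<in> points R"
        using b inv_c ce by (auto simp: smult_vec_def points_def)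
      fix j :: nat assume j: "j < 5"
      have "a j = inv c \<otimes> (c \<otimes> a j)"
        using inv_c ce j a by (simp add: m_assoc[symmetric] points_closed)
      also have "\<dots> = (inv c \<otimes> e) \<otimes> b j"
        using eq j inv_c ce b by (simp add: m_assoc points_closed)
      finally show "a j = smult_vec R (inv c \<otimes> e) b j"
        using j by (simp add: smult_vec_def)
    qed
    then show False
      using not_multiple inv_c ce by auto
  qed
  obtain j where j: "j < 5" "b j \<noteq> \<zero>"
    using b by (rule nonzero_component)
  have "e \<otimes> b j = \<zero>"
    using eq j c0 a by (metis l_null points_closed)
  then have "e = \<zero>"
    using j ce b by (simp add: integral_iff points_closed)
  with c0 show "c = \<zero> \<and> e = \<zero>" ..
qed

lemma independent_dirs_nonzero:
  assumes ind: "independent_dirs R a b" and "a \<in> points R" and "b \<in> points R"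
  shows "a \<noteq> zero_vec R" and "b \<noteq> zero_vec R"
proof -
  show "a \<noteq> zero_vec R"
  proof
    assume "a = zero_vec R"
    then have "\<one> \<otimes> a j = \<zero> \<otimes> b j" if "j < 5" for j
      using that assms(3) by (simp add: zero_vec_def points_closed)
    then have "\<one> = \<zero>"
      by (rule independent_dirsD(1)[OF ind one_closed zero_closed])
    then show False
      by simp
  qed
  show "b \<noteq> zero_vec R"
  proof
    assume "b = zero_vec R"
    then have "\<zero> \<otimes> a j = \<one> \<otimes> b j" if "j < 5" for j
      using that assms(2) by (simp add: zero_vec_def points_closed)
    then have "\<one> = \<zero>"
      by (rule independent_dirsD(2)[OF ind zero_closed one_closed])
    then show False
      by simp
  qed
qed

lemma line_point_line_point_eq_iff:
  assumes ind: "independent_dirs R a b" and pts: "x \<in> points R" "a \<in> points R" "b \<in> points R"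
    and sc: "\<alpha> \<in> carrier R" "\<beta> \<in> carrier R" "\<gamma> \<in> carrier R" "\<delta> \<in> carrier R"
  shows "line_point R (line_point R x \<alpha> a) \<beta> b = line_point R (line_point R x \<gamma> a) \<delta> b
    \<longleftrightarrow> \<alpha> = \<gamma> \<and> \<beta> = \<delta>"
proof
  assume eq: "line_point R (line_point R x \<alpha> a) \<beta> b = line_point R (line_point R x \<gamma> a) \<delta> b"
  have coords: "(\<alpha> \<ominus> \<gamma>) \<otimes> a j = (\<delta> \<ominus> \<beta>) \<otimes> b j" if j: "j < 5" for j
  proof -
    have C: "x j \<in> carrier R" "a j \<in> carrier R" "b j \<in> carrier R"
      using pts j by (auto simp: points_closed)
    have "(\<alpha> \<ominus> \<gamma>) \<otimes> a j = (x j \<oplus> \<alpha> \<otimes> a j \<oplus> \<beta> \<otimes> b j) \<ominus> (x j \<oplus> \<gamma> \<otimes> a j \<oplus> \<beta> \<otimes> b j)"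
      using C sc by algebra
    also have "\<dots> = (x j \<oplus> \<gamma> \<otimes> a j \<oplus> \<delta> \<otimes> b j) \<ominus> (x j \<oplus> \<gamma> \<otimes> a j \<oplus> \<beta> \<otimes> b j)"
      using fun_cong[OF eq, of j] j by simp
    also have "\<dots> = (\<delta> \<ominus> \<beta>) \<otimes> b j"
      using C sc by algebra
    finally show ?thesis .
  qed
  have "\<alpha> \<ominus> \<gamma> \<in> carrier R" and "\<delta> \<ominus> \<beta> \<in> carrier R"
    using sc by simp_all
  from independent_dirsD[OF ind this coords] show "\<alpha> = \<gamma> \<and> \<beta> = \<delta>"
    using sc by simp
qed simp

lemma line_point_line_point_not_mem_affine_line:
  assumes ind: "independent_dirs R a b" and pts: "x \<in> points R" "a \<in> points R" "b \<in> points R"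
    and "s \<in> carrier R" "t \<in> carrier R" "t \<noteq> \<zero>"
  shows "line_point R (line_point R x s a) t b \<notin> affine_line R x a"
proof
  assume "line_point R (line_point R x s a) t b \<in> affine_line R x a"
  then obtain u where u: "u \<in> carrier R" "line_point R (line_point R x s a) t b = line_point R x u a"
    by (auto simp: affine_line_eq_image)
  then have "line_point R (line_point R x s a) t b = line_point R (line_point R x u a) \<zero> b"
    using pts by simp
  then show False
    using line_point_line_point_eq_iff[OF ind pts _ _ u(1) zero_closed] assms by blast
qed

lemma affine_line_neq_if_independent:
  assumes ind: "independent_dirs R a b"
    and pts: "p \<in> points R" "p' \<in> points R" "a \<in> points R" "b \<in> points R"
  shows "affine_line R p a \<noteq> affine_line R p' b"
proof
  assume eq: "affine_line R p a = affine_line R p' b"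
  have "p \<in> affine_line R p' b" and "line_point R p \<one> a \<in> affine_line R p' b"
    using eq pts mem_affine_line_self[of p a] by (auto simp: affine_line_eq_image)
  then obtain t t' where t: "t \<in> carrier R" "p = line_point R p' t b"
    and t': "t' \<in> carrier R" "line_point R p \<one> a = line_point R p' t' b"
    by (auto simp: affine_line_eq_image)
  have "\<one> \<otimes> a j = (t' \<ominus> t) \<otimes> b j" if j: "j < 5" for j
  proof -
    have C: "p j \<in> carrier R" "p' j \<in> carrier R" "a j \<in> carrier R" "b j \<in> carrier R"
      using pts j by (auto simp: points_closed)
    have "\<one> \<otimes> a j = (p j \<oplus> \<one> \<otimes> a j) \<ominus> p j"
      using C by algebra
    also have "\<dots> = (p' j \<oplus> t' \<otimes> b j) \<ominus> (p' j \<oplus> t \<otimes> b j)"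
      using fun_cong[OF t'(2), of j] fun_cong[OF t(2), of j] j by simp
    also have "\<dots> = (t' \<ominus> t) \<otimes> b j"
      using C t t' by algebra
    finally show ?thesis .
  qed
  then have "\<one> = \<zero>"
    using t t' by (intro independent_dirsD(1)[OF ind]) auto
  then show False
    by simp
qed

lemma distinct_rectangle_vertices:
  assumes ind: "independent_dirs R a b" and pts: "x \<in> points R" "a \<in> points R" "b \<in> points R"
    and st: "s \<in> carrier R" "t \<in> carrier R" "s \<noteq> \<zero>" "t \<noteq> \<zero>"
  defines "N \<equiv> \<lambda>\<alpha> \<beta>. line_point R (line_point R x \<alpha> a) \<beta> b"
  shows "distinct [Inl (N \<zero> \<zero>), Inr (affine_line R (N \<zero> \<zero>) a), Inl (N s \<zero>), Inr (affine_line R (N s \<zero>) b),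
    Inl (N s t), Inr (affine_line R (N \<zero> t) a), Inl (N \<zero> t), Inr (affine_line R (N \<zero> \<zero>) b)]"
proof -
  have N_points: "N \<alpha> \<beta> \<in> points R" if "\<alpha> \<in> carrier R" "\<beta> \<in> carrier R" for \<alpha> \<beta>
    using that pts by (simp add: N_def)
  let ?A0 = "affine_line R (N \<zero> \<zero>) a" and ?At = "affine_line R (N \<zero> t) a"
    and ?B0 = "affine_line R (N \<zero> \<zero>) b" and ?Bs = "affine_line R (N s \<zero>) b"
  have a_b_lines: "affine_line R (N \<zero> \<beta>) a \<noteq> affine_line R (N \<alpha> \<zero>) b"
    if "\<alpha> \<in> carrier R" "\<beta> \<in> carrier R" for \<alpha> \<beta>
    using that ind pts N_points by (intro affine_line_neq_if_independent) auto
  have "?A0 \<noteq> ?At"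
    using mem_affine_line_self[OF N_points pts(2), of \<zero> t]
      line_point_line_point_not_mem_affine_line[OF ind pts zero_closed st(2,4)] pts st
    by (auto simp: N_def)
  moreover have "?Bs \<noteq> ?B0"
    using mem_affine_line_self[OF N_points pts(3), of s \<zero>]
      line_point_line_point_not_mem_affine_line[OF independent_dirs_commute[OF ind] pts(1,3,2)
        zero_closed st(1,3)] pts st
    by (auto simp: N_def)
  moreover have "?A0 \<noteq> ?Bs" "?A0 \<noteq> ?B0" "?Bs \<noteq> ?At" "?At \<noteq> ?B0"
    using a_b_lines st by (auto dest: not_sym)
  moreover have "N \<alpha> \<beta> = N \<gamma> \<delta> \<longleftrightarrow> \<alpha> = \<gamma> \<and> \<beta> = \<delta>"
    if "\<alpha> \<in> carrier R" "\<beta> \<in> carrier R" "\<gamma> \<in> carrier R" "\<delta> \<in> carrier R" for \<alpha> \<beta> \<gamma> \<delta>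
    unfolding N_def using ind pts that by (rule line_point_line_point_eq_iff)
  then have "N \<zero> \<zero> \<noteq> N s \<zero>" "N \<zero> \<zero> \<noteq> N s t" "N \<zero> \<zero> \<noteq> N \<zero> t"
    "N s \<zero> \<noteq> N s t" "N s \<zero> \<noteq> N \<zero> t" "N s t \<noteq> N \<zero> t"
    using st by auto
  ultimately show ?thesis
    by auto
qed

lemma C8_of_rectangle:
  assumes ind: "independent_dirs R a b" and pts: "x \<in> points R" "a \<in> points R" "b \<in> points R"
    and st: "s \<in> carrier R" "t \<in> carrier R" "s \<noteq> \<zero>" "t \<noteq> \<zero>"
    and corners: "\<And>\<alpha> \<beta>. \<alpha> \<in> {\<zero>, s} \<Longrightarrow> \<beta> \<in> {\<zero>, t} \<Longrightarrow>
      line_point R (line_point R x \<alpha> a) \<beta> b \<in> edge_points R H a \<inter> edge_points R H b"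
  shows "has_C8 H"
proof -
  define N where "N \<alpha> \<beta> = line_point R (line_point R x \<alpha> a) \<beta> b" for \<alpha> \<beta>
  have edges: "{Inl (N \<alpha> \<beta>), Inr (affine_line R (N \<zero> \<beta>) a)} \<in> H"
    "{Inl (N \<alpha> \<beta>), Inr (affine_line R (N \<alpha> \<zero>) b)} \<in> H"
    if "\<alpha> \<in> {\<zero>, s}" "\<beta> \<in> {\<zero>, t}" for \<alpha> \<beta>
  proof -
    have C: "\<alpha> \<in> carrier R" "\<beta> \<in> carrier R"
      using that st by auto
    then have "affine_line R (N \<alpha> \<beta>) a = affine_line R (N \<zero> \<beta>) a"
      using pts by (simp add: N_def line_point_commute[of x a b] affine_line_line_point)
    moreover have "affine_line R (N \<alpha> \<beta>) b = affine_line R (N \<alpha> \<zero>) b"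
      using C pts by (simp add: N_def affine_line_line_point)
    moreover have "N \<alpha> \<beta> \<in> edge_points R H a \<inter> edge_points R H b"
      using corners[OF that] by (simp add: N_def)
    ultimately show "{Inl (N \<alpha> \<beta>), Inr (affine_line R (N \<zero> \<beta>) a)} \<in> H"
      "{Inl (N \<alpha> \<beta>), Inr (affine_line R (N \<alpha> \<zero>) b)} \<in> H"
      by (simp_all add: edge_points_def)
  qed
  have "distinct [Inl (N \<zero> \<zero>), Inr (affine_line R (N \<zero> \<zero>) a), Inl (N s \<zero>), Inr (affine_line R (N s \<zero>) b),
    Inl (N s t), Inr (affine_line R (N \<zero> t) a), Inl (N \<zero> t), Inr (affine_line R (N \<zero> \<zero>) b)]"
    unfolding N_def using ind pts st by (rule distinct_rectangle_vertices)
  then show ?thesis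
    by (rule has_C8I)
      (use edges[of \<zero> \<zero>] edges[of s \<zero>] edges[of s t] edges[of \<zero> t] in \<open>simp_all add: insert_commute\<close>)
qed

lemma inj_on_affine_line_translates:
  assumes ind: "independent_dirs R a b" and pts: "a \<in> points R" "b \<in> points R"
    and no_C8: "\<not> has_C8 H" and s: "s \<in> carrier R" "s \<noteq> \<zero>"
  defines "S \<equiv> edge_points R H a \<inter> edge_points R H b"
  shows "inj_on (\<lambda>x. affine_line R x b) {x \<in> S. line_point R x s a \<in> S}"
proof (rule inj_onI)
  fix x x' assume x: "x \<in> {x \<in> S. line_point R x s a \<in> S}" and x': "x' \<in> {x \<in> S. line_point R x s a \<in> S}"
    and eq: "affine_line R x b = affine_line R x' b"
  have x_points: "x \<in> points R" "x' \<in> points R"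
    using x x' edge_points_subset_points by (auto simp: S_def)
  obtain t where t: "t \<in> carrier R" "x' = line_point R x t b"
    using mem_affine_line_self[OF x_points(2) pts(2)] eq by (auto simp: affine_line_eq_image)
  show "x = x'"
  proof (rule ccontr)
    assume "x \<noteq> x'"
    then have "t \<noteq> \<zero>"
      using t x_points pts by auto
    have "has_C8 H"
      using ind x_points(1) pts s(1) t(1) s(2) \<open>t \<noteq> \<zero>\<close>
    proof (rule C8_of_rectangle)
      fix \<alpha> \<beta> assume "\<alpha> \<in> {\<zero>, s}" "\<beta> \<in> {\<zero>, t}"
      then show "line_point R (line_point R x \<alpha> a) \<beta> b \<in> edge_points R H a \<inter> edge_points R H b"
        using x x' t s x_points pts by (auto simp: S_def line_point_commute[of x a b])
    qed
    then show False
      using no_C8 by simp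
  qed
qed

lemma card_translates_le:
  assumes fin: "finite (carrier R)" and ind: "independent_dirs R a b"
    and pts: "a \<in> points R" "b \<in> points R" and no_C8: "\<not> has_C8 H" and s: "s \<in> carrier R" "s \<noteq> \<zero>"
  defines "S \<equiv> edge_points R H a \<inter> edge_points R H b"
  shows "card {x \<in> S. line_point R x s a \<in> S} \<le> card (carrier R) ^ 4"
proof -
  let ?T = "{x \<in> S. line_point R x s a \<in> S}"
  have "card ?T = card ((\<lambda>x. affine_line R x b) ` ?T)"
    using inj_on_affine_line_translates[OF ind pts no_C8 s] by (simp add: S_def card_image)
  also have "\<dots> \<le> card (parallel_class R b)"
    using edge_points_subset_points[of R H a] finite_parallel_class[OF fin]
    by (intro card_mono) (auto simp: S_def parallel_class_eq_image)
  also have "\<dots> = card (carrier R) ^ 4"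
    using fin pts independent_dirs_nonzero[OF ind pts] by (simp add: card_parallel_class)
  finally show ?thesis .
qed

lemma card_common_line_pairs_le:
  assumes fin: "finite (carrier R)" and ind: "independent_dirs R a b"
    and pts: "a \<in> points R" "b \<in> points R" and no_C8: "\<not> has_C8 H"
  defines "S \<equiv> edge_points R H a \<inter> edge_points R H b"
  shows "card {(x, y) \<in> S \<times> S. affine_line R x a = affine_line R y a} \<le> card S + card (carrier R) ^ 5"
proof -
  let ?q = "card (carrier R)"
  define translates where "translates s = {x \<in> S. line_point R x s a \<in> S}" for s
  define shifted where "shifted s = (\<lambda>x. (x, line_point R x s a)) ` translates s" for s
  have S_points: "S \<subseteq> points R"
    using edge_points_subset_points by (auto simp: S_def)
  have finS: "finite S"
    using fin by (simp add: S_def finite_edge_points)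
  have "{(x, y) \<in> S \<times> S. affine_line R x a = affine_line R y a} \<subseteq> (\<Union>s\<in>carrier R. shifted s)"
  proof safe
    fix x y assume xy: "x \<in> S" "y \<in> S" and "affine_line R x a = affine_line R y a"
    then obtain s where "s \<in> carrier R" "y = line_point R x s a"
      using mem_affine_line_self[of y a] S_points pts by (auto simp: affine_line_eq_image)
    with xy show "(x, y) \<in> (\<Union>s\<in>carrier R. shifted s)"
      by (auto simp: shifted_def translates_def)
  qed
  then have "card {(x, y) \<in> S \<times> S. affine_line R x a = affine_line R y a}
      \<le> card (\<Union>s\<in>carrier R. shifted s)"
    using fin finS by (intro card_mono) (auto simp: shifted_def translates_def)
  also have "\<dots> \<le> (\<Sum>s\<in>carrier R. card (shifted s))"
    by (rule card_UN_le[OF fin])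
  also have "\<dots> \<le> (\<Sum>s\<in>carrier R. card (translates s))"
    unfolding shifted_def by (intro sum_mono card_image_le) (simp add: finS translates_def)
  also have "\<dots> = card (translates \<zero>) + (\<Sum>s\<in>carrier R - {\<zero>}. card (translates s))"
    by (rule sum.remove[OF fin zero_closed])
  also have "\<dots> \<le> card S + (\<Sum>s\<in>carrier R - {\<zero>}. ?q ^ 4)"
  proof (intro add_mono sum_mono)
    show "card (translates \<zero>) \<le> card S"
      using finS by (auto simp: translates_def intro: card_mono)
    show "card (translates s) \<le> ?q ^ 4" if "s \<in> carrier R - {\<zero>}" for s
      using card_translates_le[OF fin ind pts no_C8, of s] that by (simp add: translates_def S_def)
  qed
  also have "\<dots> \<le> card S + ?q * ?q ^ 4"
    by (simp add: card_Diff1_le mult_le_mono1)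
  finally show ?thesis
    by (simp flip: power_Suc)
qed

lemma card_edge_points_Int_squared_le:
  assumes fin: "finite (carrier R)" and ind: "independent_dirs R a b"
    and pts: "a \<in> points R" "b \<in> points R" and no_C8: "\<not> has_C8 H"
  defines "S \<equiv> edge_points R H a \<inter> edge_points R H b"
  shows "card S ^ 2 \<le> card (carrier R) ^ 4 * (card S + card (carrier R) ^ 5)"
proof -
  let ?pairs = "{(x, y) \<in> S \<times> S. affine_line R x a = affine_line R y a}"
  have "finite S"
    using fin by (simp add: S_def finite_edge_points)
  moreover have "(\<lambda>x. affine_line R x a) ` S \<subseteq> parallel_class R a"
    using edge_points_subset_points[of R H a] by (auto simp: S_def parallel_class_eq_image)
  ultimately have "card S ^ 2 \<le> card (parallel_class R a) * card ?pairs"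
    using finite_parallel_class[OF fin] by (intro card_squared_le_card_mult_card_fibre_pairs)
  also have "card (parallel_class R a) = card (carrier R) ^ 4"
    using fin pts independent_dirs_nonzero[OF ind pts] by (simp add: card_parallel_class)
  also have "card ?pairs \<le> card S + card (carrier R) ^ 5"
    unfolding S_def by (rule card_common_line_pairs_le[OF fin ind pts no_C8])
  finally show ?thesis
    by simp
qed

text \<open>The parameter u stands for q powr (1/4): with it all bounds below are integral powers of u.\<close>
lemma card_edge_points_Int_le:
  assumes fin: "finite (carrier R)" and ind: "independent_dirs R a b"
    and pts: "a \<in> points R" "b \<in> points R" and no_C8: "\<not> has_C8 H"
    and q_eq: "real (card (carrier R)) = u ^ 4" and u: "1 \<le> u"
  shows "real (card (edge_points R H a \<inter> edge_points R H b)) \<le> 2 * u ^ 18"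
proof -
  define m where "m = card (edge_points R H a \<inter> edge_points R H b)"
  from card_edge_points_Int_squared_le[OF fin ind pts no_C8]
  have "real (m ^ 2) \<le> real (card (carrier R) ^ 4 * (m + card (carrier R) ^ 5))"
    unfolding m_def by (simp only: of_nat_le_iff)
  then have "real m ^ 2 \<le> u ^ 16 * (real m + u ^ 20)"
    by (simp add: q_eq flip: power_mult)
  then have "real m \<le> 2 * u ^ 18"
  proof (rule le_if_square_le_affine[rotated 3])
    show "0 \<le> u ^ 16" and "2 * u ^ 16 \<le> 2 * u ^ 18"
      using u by (simp_all add: power_increasing)
    show "2 * u ^ 16 * u ^ 20 \<le> (2 * u ^ 18) ^ 2"
      by (simp add: power_mult_distrib mult_ac flip: power_mult power_add)
  qed
  then show ?thesis
    by (simp add: m_def)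
qed

lemma independent_dirs_if_valid_dirs:
  assumes "valid_dirs R D" and "i < card (carrier R)" "j < card (carrier R)" "i \<noteq> j"
  shows "independent_dirs R (D i) (D j)"
  using assms unfolding valid_dirs_def by (blast intro: independent_dirs_if_not_multiple)

lemma card_le_card_Sigma_edge_points:
  assumes fin: "finite (carrier R)" and D: "valid_dirs R D" and HE: "H \<subseteq> inc_edges R D"
  shows "card H \<le> card (SIGMA i:{..<card (carrier R)}. edge_points R H (D i))"
proof -
  let ?P = "SIGMA i:{..<card (carrier R)}. edge_points R H (D i)"
  have "H \<subseteq> (\<lambda>(i, x). {Inl x, Inr (affine_line R x (D i))}) ` ?P"
  proof
    fix e assume e: "e \<in> H"
    then obtain x l where x: "e = {Inl x, Inr l}" "x \<in> points R" "x \<in> l" and "l \<in> line_set R D"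
      using HE by (auto simp: inc_edges_def)
    then obtain i p where i: "i < card (carrier R)" and p: "p \<in> points R" "l = affine_line R p (D i)"
      by (auto simp: line_set_def parallel_class_def)
    have "D i \<in> points R"
      using D i by (simp add: valid_dirs_def)
    then have "affine_line R x (D i) = l"
      using x p by (simp add: affine_line_eq_if_mem)
    then show "e \<in> (\<lambda>(i, x). {Inl x, Inr (affine_line R x (D i))}) ` ?P"
      using e x i by (auto simp: edge_points_def image_iff)
  qed
  moreover have "finite ?P"
    using finite_edge_points[OF fin] by simp
  ultimately show ?thesis
    by (meson card_image_le card_mono finite_imageI order_trans)
qed

lemma card_le_if_C8_free:
  assumes fin: "finite (carrier R)" and D: "valid_dirs R D"
    and HE: "H \<subseteq> inc_edges R D" and no_C8: "\<not> has_C8 H"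
  shows "real (card H) \<le> 2 * real (card (carrier R)) powr (23/4)"
proof -
  let ?q = "card (carrier R)"
  define u where "u = real ?q powr (1/4)"
  have "carrier R \<noteq> {}"
    using zero_closed by blast
  then have "1 \<le> ?q"
    using fin by (simp add: Suc_le_eq card_gt_0_iff)
  then have q_eq: "real ?q = u ^ 4" and u: "1 \<le> u"
    by (auto simp: u_def powr_power ge_one_powr_ge_zero)
  define S where "S i = edge_points R H (D i)" for i
  define E where "E = real (card (Sigma {..<?q} S))"
  have "S i \<subseteq> points R" for i
    by (simp add: S_def edge_points_subset_points)
  moreover have "0 \<le> 2 * u ^ 18"
    using u by simp
  moreover have "real (card (S i \<inter> S j)) \<le> 2 * u ^ 18"
    if "i \<in> {..<?q}" "j \<in> {..<?q}" "i \<noteq> j" for i j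
    unfolding S_def using that D
    by (intro card_edge_points_Int_le[OF fin _ _ _ no_C8 q_eq u] independent_dirs_if_valid_dirs)
      (auto simp: valid_dirs_def)
  ultimately have "E ^ 2 \<le> real (card (points R)) * (E + real (card {..<?q}) ^ 2 * (2 * u ^ 18))"
    unfolding E_def using finite_points[OF fin] by (intro card_Sigma_squared_le) auto
  also have "real (card (points R)) = u ^ 20"
    by (simp add: card_points q_eq flip: power_mult)
  also have "real (card {..<?q}) ^ 2 * (2 * u ^ 18) = 2 * u ^ 26"
    by (simp add: q_eq mult.left_commute flip: power_mult power_add)
  finally have "E \<le> 2 * u ^ 23"
  proof (rule le_if_square_le_affine[rotated 3])
    show "0 \<le> u ^ 20" and "2 * u ^ 20 \<le> 2 * u ^ 23"
      using u by (simp_all add: power_increasing)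
    show "2 * u ^ 20 * (2 * u ^ 26) \<le> (2 * u ^ 23) ^ 2"
      by (simp add: power_mult_distrib mult_ac flip: power_mult power_add)
  qed
  moreover have "real (card H) \<le> E"
    unfolding E_def S_def using card_le_card_Sigma_edge_points[OF fin D HE] by simp
  moreover have "u ^ 23 = real ?q powr (23/4)"
    using \<open>1 \<le> ?q\<close> by (simp add: u_def powr_power)
  ultimately show ?thesis
    by simp
qed

end

lemma finite_inc_edges:
  assumes "finite (carrier R)"
  shows "finite (inc_edges R D)"
proof -
  have "finite (line_set R D)"
    using finite_parallel_class[OF assms] by (simp add: line_set_def)
  then have "finite (Pow (Inl ` points R \<union> Inr ` line_set R D))"
    using finite_points[OF assms] by simp
  moreover have "inc_edges R D \<subseteq> Pow (Inl ` points R \<union> Inr ` line_set R D)"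
    by (auto simp: inc_edges_def)
  ultimately show ?thesis
    by (rule finite_subset[rotated])
qed

lemma ex_C8_inc_edges_le:
  assumes "field R" and "finite (carrier R)" and "valid_dirs R D"
  shows "real (ex_C8 (inc_edges R D)) \<le> 2 * real (card (carrier R)) powr (23/4)"
proof -
  obtain H where "H \<subseteq> inc_edges R D" "\<not> has_C8 H" "ex_C8 (inc_edges R D) = card H"
    using finite_inc_edges[OF assms(2)] by (rule ex_C8_attained)
  then show ?thesis
    using field.card_le_if_C8_free[OF assms] by simp
qed

lemma has_C8_if_dense:
  assumes "field R" and "finite (carrier R)" and "valid_dirs R D" and "H \<subseteq> inc_edges R D"
    and "0 < \<delta>" and "nat \<lceil>(2 / \<delta>) ^ 4\<rceil> < card (carrier R)"
    and "\<delta> * real (card (carrier R)) ^ 6 \<le> real (card H)"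
  shows "has_C8 H"
proof (rule ccontr)
  have "real (nat \<lceil>(2 / \<delta>) ^ 4\<rceil>) < real (card (carrier R))"
    using assms(6) by (simp only: of_nat_less_iff)
  then have "(2 / \<delta>) ^ 4 < real (card (carrier R))"
    using of_nat_ceiling[of "(2 / \<delta>) ^ 4"] by linarith
  moreover have "0 \<le> (2 / \<delta>) ^ 4"
    by simp
  moreover assume "\<not> has_C8 H"
  then have "\<delta> * real (card (carrier R)) ^ 6 \<le> 2 * real (card (carrier R)) powr (23/4)"
    using field.card_le_if_C8_free[OF assms(1-4)] assms(7) by linarith
  ultimately show False
    using le_power4_if_mult_pow6_le_powr[OF assms(5)] by force
qed

theorem theorem3p1:
  shows "(\<forall>\<delta>::real. \<delta> > 0 \<longrightarrow> (\<exists>q0::nat. \<forall>(R :: nat ring) D H.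
            field R \<and> finite (carrier R) \<and> card (carrier R) \<ge> q0 \<and> valid_dirs R D \<and>
            H \<subseteq> inc_edges R D \<and> real (card H) \<ge> \<delta> * real (card (carrier R)) ^ 6
            \<longrightarrow> has_C8 H))
       \<and> (\<exists>(C::real) (q1::nat). \<forall>(R :: nat ring) D.
            field R \<and> finite (carrier R) \<and> card (carrier R) \<ge> q1 \<and> valid_dirs R D
            \<longrightarrow> real (ex_C8 (inc_edges R D)) \<le> C * real (card (carrier R)) powr (23/4))"
  apply (intro conjI allI impI)
  subgoal for \<delta>
    by (intro exI[of _ "nat \<lceil>(2 / \<delta>) ^ 4\<rceil> + 1"] allI impI, elim conjE, rule has_C8_if_dense) auto
  using ex_C8_inc_edges_le by blast

end
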